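(* In the iAPG setting described in the context, assume $\mu>0$ and $\varepsilon_k=0$ for all $k\ge0$; let $\kappa=\frac{L_g}{\gamma_{\mathrm{dec}}\mu}$ and $C_L=\frac{L_g+L_h}{\sqrt{\underline L}}+\sqrt{\frac{L_g+L_h}{\gamma_{\mathrm{dec}}}}$. Suppose that for each $k\ge0$ a step $\tilde\eta_k$ with $\frac{\gamma_{\mathrm{dec}}}{L_g+L_h}<\tilde\eta_k\le\frac1{\underline L}$ is given and $\tilde x^{(k)}=\mathrm{prox}_{\tilde\eta_k r}\big(x^{(k)}-\tilde\eta_k(\nabla g(x^{(k)})+\nabla h(x^{(k)}))\big)$ satisfies $g(\tilde x^{(k)})+h(\tilde x^{(k)})\le g(x^{(k)})+h(x^{(k)})+\langle\nabla g(x^{(k)})+\nabla h(x^{(k)}),\tilde x^{(k)}-x^{(k)}\rangle+\frac1{2\tilde\eta_k}\|\tilde x^{(k)}-x^{(k)}\|^2$. Then for all $k\ge0$, $$\mathrm{dist}\big(0,\partial F(\tilde x^{(k)})\big)\le C_L\sqrt{2\Big(F(x^{(0)})-F^*+\frac{\gamma_0}{2}\|x^*-z^{(0)}\|^2\Big)}\Big(1-\sqrt{1/\kappa}\Big)^{k/2}.$$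
   Context: iAPG setting. Let $g,h:\mathbb R^n\to\mathbb R$ and $r:\mathbb R^n\to\mathbb R\cup\{+\infty\}$, where $g$ is convex, $\mu$-strongly convex for some $\mu\ge0$, and differentiable with $L_g$-Lipschitz gradient ($L_g>0$); $h$ is convex and differentiable with $L_h$-Lipschitz gradient; $r$ is proper, closed and convex. Put $H=h+r$, $F=g+H$, and assume $F$ attains its minimum value $F^*$ at some point $x^*$. Fix constants $\gamma_{\mathrm{dec}}\in(0,1)$ and $\underline L>0$ with $\mu\le\underline L\le L_g$. We consider points $x^{(k)},z^{(k)},y^{(k)}\in\mathbb R^n$ and scalars $\eta_k>0,\alpha_k>0,\gamma_k>0,\varepsilon_k\ge0$ ($k\ge0$) such that $x^{(0)}=z^{(0)}\in\mathrm{dom}(H)$, $\gamma_0\ge\mu$, and for every $k\ge0$: (i) $\gamma_{\mathrm{dec}}/L_g<\eta_k\le1/\underline L$; (ii) $\gamma_{k+1}=\alpha_k^2/\eta_k=(1-\alpha_k)\gamma_k+\alpha_k\mu$; (iii) $y^{(k)}=\frac{1}{\alpha_k\gamma_k+\gamma_{k+1}}\big(\alpha_k\gamma_k z^{(k)}+\gamma_{k+1}x^{(k)}\big)$; (iv) $\mathrm{dist}\big(0,\ \nabla g(y^{(k)})+\tfrac1{\eta_k}(x^{(k+1)}-y^{(k)})+\partial H(x^{(k+1)})\big)\le\varepsilon_k$; (v) $g(x^{(k+1)})\le g(y^{(k)})+\langle\nabla g(y^{(k)}),x^{(k+1)}-y^{(k)}\rangle+\frac1{2\eta_k}\|x^{(k+1)}-y^{(k)}\|^2$;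 (vi) $z^{(k+1)}=x^{(k)}+\frac1{\alpha_k}(x^{(k+1)}-x^{(k)})$. Here $\partial$ denotes the convex subdifferential and $\mathrm{dist}(0,S)=\inf_{s\in S}\|s\|$. $\mathrm{prox}_{\eta r}(v)=\arg\min_u\{\frac12\|u-v\|^2+\eta r(u)\}$. *)

theory Defs
  imports "HOL-Analysis.Analysis"
begin

definition proper_fun :: "('a \<Rightarrow> ereal) \<Rightarrow> bool" where
  "proper_fun f \<longleftrightarrow> (\<forall>x. f x \<noteq> -\<infinity>) \<and> (\<exists>x. f x \<noteq> \<infinity>)"

definition epigraph :: "('a \<Rightarrow> ereal) \<Rightarrow> ('a \<times> real) set" where
  "epigraph f = {(x, t). f x \<le> ereal t}"

definition closed_fun :: "('a::topological_space \<Rightarrow> ereal) \<Rightarrow> bool" where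
  "closed_fun f \<longleftrightarrow> closed (epigraph f)"

definition convex_fun :: "('a::real_vector \<Rightarrow> ereal) \<Rightarrow> bool" where
  "convex_fun f \<longleftrightarrow> convex (epigraph f)"

definition strongly_convex :: "real \<Rightarrow> ('a::real_normed_vector \<Rightarrow> real) \<Rightarrow> bool" where
  "strongly_convex \<mu> f \<longleftrightarrow> (\<forall>x y u. 0 \<le> u \<and> u \<le> 1 \<longrightarrow>
      f ((1 - u) *\<^sub>R x + u *\<^sub>R y) \<le> (1 - u) * f x + u * f y - \<mu> / 2 * u * (1 - u) * (norm (x - y))\<^sup>2)"

definition subdiff :: "('a::real_inner \<Rightarrow> ereal) \<Rightarrow> 'a \<Rightarrow> 'a set" where
  "subdiff f x = {v. \<bar>f x\<bar> \<noteq> \<infinity> \<and> (\<forall>y. f x + ereal (v \<bullet> (y - x)) \<le> f y)}"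

text \<open>dist(0,S) = inf over s in S of norm s, as an extended real (= +infinity for empty S).\<close>
definition dist0 :: "'a::real_normed_vector set \<Rightarrow> ereal" where
  "dist0 S = (INF s\<in>S. ereal (norm s))"

definition is_prox :: "real \<Rightarrow> ('a::real_normed_vector \<Rightarrow> ereal) \<Rightarrow> 'a \<Rightarrow> 'a \<Rightarrow> bool" where
  "is_prox \<eta> r v p \<longleftrightarrow> (\<forall>u. ereal (1/2 * (norm (p - v))\<^sup>2) + ereal \<eta> * r p
                              \<le> ereal (1/2 * (norm (u - v))\<^sup>2) + ereal \<eta> * r u)"

end

theory Submission
  imports Defs
begin

text \<open>The exact iAPG iterates decrease the potential F(x k) - F* + \<gamma> k / 2 * norm (x* - z k)^2
  by the factor 1 - \<alpha> k per step; by induction \<gamma> k \<ge> \<mu>, so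
  \<alpha> k^2 = \<eta> k * \<gamma> (k + 1) \<ge> \<eta> k * \<mu> > \<gamma>dec * \<mu> / Lg = 1 / \<kappa>, which gives the linear
  rate 1 - sqrt (1 / \<kappa>). The proximal-gradient point xt k comes with the explicit subgradient
  \<nabla>(g + h)(xt k) - \<nabla>(g + h)(x k) + (x k - xt k) / \<eta>t k of F, of norm at most
  (Lg + Lh + 1 / \<eta>t k) * norm (xt k - x k), while sufficient decrease bounds
  norm (xt k - x k)^2 by 2 \<eta>t k (F(x k) - F*), hence by 2 \<eta>t k times the potential.\<close>

section \<open>Differentiable convex functions\<close>

lemma directional_derivative_le_of_quadratic_bound:
  fixes f :: "'a::real_inner \<Rightarrow> real"
  assumes f_deriv: "(f has_derivative (\<lambda>d. D \<bullet> d)) (at y)"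
    and bound: "\<And>t. 0 < t \<Longrightarrow> t \<le> 1 \<Longrightarrow> f (y + t *\<^sub>R d) \<le> f y + t * c + t\<^sup>2 * K"
  shows "D \<bullet> d \<le> c"
proof -
  let ?p = "\<lambda>t::real. f (y + t *\<^sub>R d)"
  have "((\<lambda>t. y + t *\<^sub>R d) has_derivative (\<lambda>t. t *\<^sub>R d)) (at 0)"
    by (auto intro!: derivative_eq_intros)
  from has_derivative_compose[OF this, of f "\<lambda>d. D \<bullet> d"] f_deriv
  have "(?p has_field_derivative (D \<bullet> d)) (at 0)"
    by (simp add: has_field_derivative_def mult.commute[of _ "D \<bullet> d"])
  hence "((\<lambda>t. (?p t - ?p 0) / t) \<longlongrightarrow> D \<bullet> d) (at_right 0)"
    by (auto simp: DERIV_def intro: tendsto_mono at_within_le_at)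
  moreover have "((\<lambda>t. c + t * K) \<longlongrightarrow> c) (at_right (0::real))"
    by (auto intro!: tendsto_eq_intros)
  moreover have "eventually (\<lambda>t. (?p t - ?p 0) / t \<le> c + t * K) (at_right (0::real))"
  proof -
    have "eventually (\<lambda>t. t < 1) (at_right (0::real))"
      unfolding eventually_at_right_field by (rule exI[of _ 1]) auto
    with eventually_at_right_less show ?thesis
    proof eventually_elim
      case (elim t)
      hence "?p t - ?p 0 \<le> t * (c + t * K)"
        using bound[of t] by (simp add: power2_eq_square algebra_simps)
      thus ?case using elim by (simp add: divide_le_eq mult.commute)
    qed
  qed
  ultimately show ?thesis by (intro tendsto_le[of "at_right 0"]) auto
qed

lemma strongly_convex_gradient_ineq:
  fixes g :: "'a::real_inner \<Rightarrow> real"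
  assumes g_deriv: "(g has_derivative (\<lambda>d. D \<bullet> d)) (at y)" and sc: "strongly_convex \<mu> g"
  shows "g y + D \<bullet> (u - y) + \<mu> / 2 * (norm (u - y))\<^sup>2 \<le> g u"
proof -
  have "D \<bullet> (u - y) \<le> g u - g y - \<mu> / 2 * (norm (u - y))\<^sup>2"
  proof (rule directional_derivative_le_of_quadratic_bound[OF g_deriv])
    fix t :: real assume t: "0 < t" "t \<le> 1"
    have "g ((1 - t) *\<^sub>R y + t *\<^sub>R u)
        \<le> (1 - t) * g y + t * g u - \<mu> / 2 * t * (1 - t) * (norm (y - u))\<^sup>2"
      using sc t unfolding strongly_convex_def by auto
    also have "\<dots> = g y + t * (g u - g y - \<mu> / 2 * (norm (u - y))\<^sup>2)
                     + t\<^sup>2 * (\<mu> / 2 * (norm (u - y))\<^sup>2)"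
      by (simp add: norm_minus_commute power2_eq_square field_simps)
    finally show "g (y + t *\<^sub>R (u - y)) \<le> \<dots>"
      by (simp add: algebra_simps)
  qed
  thus ?thesis by simp
qed

lemma strongly_convex_imp_convex_on:
  fixes g :: "'a::real_normed_vector \<Rightarrow> real"
  assumes "strongly_convex \<mu> g" "\<mu> \<ge> 0"
  shows "convex_on UNIV g"
proof (rule convex_onI)
  fix t :: real and x y assume t: "0 < t" "t < 1"
  have "g ((1 - t) *\<^sub>R x + t *\<^sub>R y) \<le> (1 - t) * g x + t * g y - \<mu> / 2 * t * (1 - t) * (norm (x - y))\<^sup>2"
    using assms(1) t unfolding strongly_convex_def by auto
  also have "\<dots> \<le> (1 - t) * g x + t * g y"
    using assms(2) t by simp
  finally show "g ((1 - t) *\<^sub>R x + t *\<^sub>R y) \<le> (1 - t) * g x + t * g y" .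
qed simp

lemma convex_on_gradient_ineq:
  fixes f :: "'a::real_inner \<Rightarrow> real"
  assumes f_deriv: "(f has_derivative (\<lambda>d. D \<bullet> d)) (at y)" and cvx: "convex_on UNIV f"
  shows "f y + D \<bullet> (u - y) \<le> f u"
proof -
  have "D \<bullet> (u - y) \<le> f u - f y"
  proof (rule directional_derivative_le_of_quadratic_bound[OF f_deriv, where K = 0])
    fix t :: real assume t: "0 < t" "t \<le> 1"
    have "f ((1 - t) *\<^sub>R y + t *\<^sub>R u) \<le> (1 - t) * f y + t * f u"
      using convex_onD[OF cvx] t by auto
    thus "f (y + t *\<^sub>R (u - y)) \<le> f y + t * (f u - f y) + t\<^sup>2 * 0"
      by (simp add: algebra_simps)
  qed
  thus ?thesis by simp
qed

lemma lipschitz_constant_nonneg: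
  fixes f :: "'a::euclidean_space \<Rightarrow> 'b::real_normed_vector"
  assumes "\<And>u v. norm (f u - f v) \<le> L * norm (u - v)"
  shows "L \<ge> 0"
proof -
  obtain b :: 'a where "b \<in> Basis" using nonempty_Basis by blast
  hence "norm b > 0" using nonzero_Basis by auto
  moreover have "0 \<le> L * norm (b - 0)" using assms by (rule order_trans[OF norm_ge_zero])
  ultimately show ?thesis by (simp add: zero_le_mult_iff)
qed

section \<open>Proximal points\<close>

lemma convex_fun_combination_le:
  fixes r :: "'a::real_vector \<Rightarrow> ereal"
  assumes "convex_fun r" "r p = ereal a" "r u = ereal b" "0 \<le> t" "t \<le> 1"
  shows "r ((1 - t) *\<^sub>R p + t *\<^sub>R u) \<le> ereal ((1 - t) * a + t * b)"
proof -
  have "(p, a) \<in> epigraph r" "(u, b) \<in> epigraph r" using assms by (auto simp: epigraph_def)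
  hence "(1 - t) *\<^sub>R (p, a) + t *\<^sub>R (u, b) \<in> epigraph r"
    using assms(1,4,5) unfolding convex_fun_def by (intro convexD) auto
  thus ?thesis by (simp add: epigraph_def)
qed

lemma is_prox_finite:
  assumes "is_prox \<eta> r v p" "\<eta> > 0" "proper_fun r"
  shows "\<bar>r p\<bar> \<noteq> \<infinity>"
proof -
  obtain u where u: "r u \<noteq> \<infinity>" "r u \<noteq> -\<infinity>" using assms(3) by (auto simp: proper_fun_def)
  have "ereal (1/2 * (norm (p - v))\<^sup>2) + ereal \<eta> * r p
      \<le> ereal (1/2 * (norm (u - v))\<^sup>2) + ereal \<eta> * r u"
    using assms(1) unfolding is_prox_def by blast
  hence "r p \<noteq> \<infinity>" using u assms(2) by auto
  thus ?thesis using assms(3) by (auto simp: proper_fun_def)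
qed

lemma nonneg_of_forall_nonneg_add_mult:
  fixes a b :: real
  assumes "\<And>t. 0 < t \<Longrightarrow> t \<le> 1 \<Longrightarrow> 0 \<le> a + t * b"
  shows "0 \<le> a"
proof (rule tendsto_lowerbound)
  show "((\<lambda>t. a + t * b) \<longlongrightarrow> a) (at_right 0)"
    by (auto intro!: tendsto_eq_intros)
  have "eventually (\<lambda>t. t < 1) (at_right (0::real))"
    unfolding eventually_at_right_field by (rule exI[of _ 1]) auto
  with eventually_at_right_less show "eventually (\<lambda>t. 0 \<le> a + t * b) (at_right 0)"
    by eventually_elim (use assms in auto)
qed simp

lemma is_prox_subgradient_ineq:
  fixes r :: "'a::real_inner \<Rightarrow> ereal"
  assumes prox: "is_prox \<eta> r v p" and eta: "\<eta> > 0" and proper: "proper_fun r" and cvx: "convex_fun r"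
  shows "r p + ereal ((1 / \<eta>) * ((v - p) \<bullet> (u - p))) \<le> r u"
proof (cases "r u = \<infinity>")
  case False
  obtain a where a: "r p = ereal a" using is_prox_finite[OF prox eta proper] by (cases "r p") auto
  obtain b where b: "r u = ereal b" using False proper by (cases "r u") (auto simp: proper_fun_def)
  define d where "d = u - p"
  have "0 \<le> (p - v) \<bullet> d + \<eta> * (b - a)"
  proof (rule nonneg_of_forall_nonneg_add_mult[where b = "(norm d)\<^sup>2 / 2"])
    fix t :: real assume t: "0 < t" "t \<le> 1"
    define ut where "ut = (1 - t) *\<^sub>R p + t *\<^sub>R u"
    have "ereal (1/2 * (norm (p - v))\<^sup>2) + ereal \<eta> * r p
        \<le> ereal (1/2 * (norm (ut - v))\<^sup>2) + ereal \<eta> * r ut"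
      using prox unfolding is_prox_def by blast
    also have "ereal \<eta> * r ut \<le> ereal \<eta> * ereal ((1 - t) * a + t * b)"
      unfolding ut_def using convex_fun_combination_le[OF cvx a b] t eta
      by (intro ereal_mult_left_mono) auto
    finally have "1/2 * (norm (p - v))\<^sup>2 + \<eta> * a \<le> 1/2 * (norm (ut - v))\<^sup>2 + \<eta> * ((1 - t) * a + t * b)"
      using a by (simp add: add_left_mono)
    moreover have "(norm (ut - v))\<^sup>2 = (norm (p - v))\<^sup>2 + 2 * t * ((p - v) \<bullet> d) + t\<^sup>2 * (norm d)\<^sup>2"
      unfolding ut_def d_def power2_norm_eq_inner
      by (simp add: inner_add_left inner_add_right inner_diff_left inner_diff_right inner_commute
          power2_eq_square algebra_simps)
    ultimately have "0 \<le> t * ((p - v) \<bullet> d + \<eta> * (b - a) + t * ((norm d)\<^sup>2 / 2))"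
      by (simp add: power2_eq_square algebra_simps)
    thus "0 \<le> (p - v) \<bullet> d + \<eta> * (b - a) + t * ((norm d)\<^sup>2 / 2)"
      using t by (simp add: zero_le_mult_iff)
  qed
  hence "a + (1 / \<eta>) * ((v - p) \<bullet> d) \<le> b" using eta by (simp add: field_simps inner_diff_left)
  thus ?thesis using a b d_def by simp
qed simp

section \<open>Proximal-gradient steps\<close>

lemma prox_grad_subgradient:
  fixes f :: "'a::real_inner \<Rightarrow> real"
  assumes f_deriv: "(f has_derivative (\<lambda>d. Df p \<bullet> d)) (at p)" and f_cvx: "convex_on UNIV f"
    and prox: "is_prox t r (x - t *\<^sub>R Df x) p" and t: "t > 0"
    and proper: "proper_fun r" and r_cvx: "convex_fun r"
  shows "Df p - Df x + (1 / t) *\<^sub>R (x - p) \<in> subdiff (\<lambda>u. ereal (f u) + r u) p"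
proof -
  obtain a where a: "r p = ereal a" using is_prox_finite[OF prox t proper] by (cases "r p") auto
  show ?thesis unfolding subdiff_def
  proof (intro CollectI conjI allI)
    show "\<bar>ereal (f p) + r p\<bar> \<noteq> \<infinity>" using a by simp
    fix u
    let ?c = "(1 / t) * ((x - t *\<^sub>R Df x - p) \<bullet> (u - p))"
    have "f p + Df p \<bullet> (u - p) \<le> f u" by (rule convex_on_gradient_ineq[OF f_deriv f_cvx])
    moreover have "ereal (a + ?c) \<le> r u"
      using is_prox_subgradient_ineq[OF prox t proper r_cvx, of u] a by simp
    ultimately have "ereal (f p + Df p \<bullet> (u - p)) + ereal (a + ?c) \<le> ereal (f u) + r u"
      by (intro add_mono) auto
    moreover have "?c = (Df p - Df x + (1 / t) *\<^sub>R (x - p)) \<bullet> (u - p) - Df p \<bullet> (u - p)"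
      using t by (simp add: inner_diff_left inner_add_left algebra_simps)
    ultimately show "ereal (f p) + r p + ereal ((Df p - Df x + (1 / t) *\<^sub>R (x - p)) \<bullet> (u - p))
        \<le> ereal (f u) + r u"
      using a by (simp add: add.assoc)
  qed
qed

lemma prox_grad_sufficient_decrease:
  fixes f :: "'a::real_inner \<Rightarrow> real"
  assumes prox: "is_prox t r (x - t *\<^sub>R Df x) p" and t: "t > 0"
    and proper: "proper_fun r" and r_cvx: "convex_fun r"
    and descent: "f p \<le> f x + Df x \<bullet> (p - x) + 1 / (2 * t) * (norm (p - x))\<^sup>2"
  shows "ereal (f p) + r p + ereal (1 / (2 * t) * (norm (p - x))\<^sup>2) \<le> ereal (f x) + r x"
proof -
  obtain a where a: "r p = ereal a" using is_prox_finite[OF prox t proper] by (cases "r p") auto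
  let ?c = "(1 / t) * ((x - t *\<^sub>R Df x - p) \<bullet> (x - p))"
  have c: "?c = 1 / t * (norm (p - x))\<^sup>2 - Df x \<bullet> (x - p)"
    using t by (simp add: inner_diff_left power2_norm_eq_inner norm_minus_commute algebra_simps)
  have "1 / (2 * t) * (norm (p - x))\<^sup>2 + 1 / (2 * t) * (norm (p - x))\<^sup>2 = 1 / t * (norm (p - x))\<^sup>2"
    by (simp add: field_simps)
  moreover have "Df x \<bullet> (p - x) = - (Df x \<bullet> (x - p))" by (simp add: inner_diff_right)
  ultimately have "f p + a + 1 / (2 * t) * (norm (p - x))\<^sup>2 \<le> f x + (a + ?c)"
    using descent unfolding c by linarith
  hence "ereal (f p) + r p + ereal (1 / (2 * t) * (norm (p - x))\<^sup>2) \<le> ereal (f x) + ereal (a + ?c)"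
    using a by simp
  also have "\<dots> \<le> ereal (f x) + r x"
    using is_prox_subgradient_ineq[OF prox t proper r_cvx, of x] a by (intro add_left_mono) simp
  finally show ?thesis .
qed

lemma prox_grad_dist0_subdiff_le:
  fixes f :: "'a::real_inner \<Rightarrow> real"
  assumes f_deriv: "(f has_derivative (\<lambda>d. Df p \<bullet> d)) (at p)" and f_cvx: "convex_on UNIV f"
    and Df_lip: "norm (Df p - Df x) \<le> L * norm (p - x)"
    and prox: "is_prox t r (x - t *\<^sub>R Df x) p" and t: "t > 0"
    and proper: "proper_fun r" and r_cvx: "convex_fun r"
  shows "dist0 (subdiff (\<lambda>u. ereal (f u) + r u) p) \<le> ereal ((L + 1 / t) * norm (p - x))"
proof -
  let ?s = "Df p - Df x + (1 / t) *\<^sub>R (x - p)"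
  have "dist0 (subdiff (\<lambda>u. ereal (f u) + r u) p) \<le> ereal (norm ?s)"
    unfolding dist0_def by (intro INF_lower prox_grad_subgradient assms)
  also have "norm ?s \<le> L * norm (p - x) + (1 / t) * norm (p - x)"
    using norm_triangle_ineq[of "Df p - Df x" "(1 / t) *\<^sub>R (x - p)"] Df_lip t
    by (simp add: norm_minus_commute)
  finally show ?thesis by (simp add: algebra_simps)
qed

lemma prox_grad_step_constant_le:
  fixes L Lbar \<gamma>dec t :: real
  assumes L: "L > 0" and \<gamma>dec: "\<gamma>dec > 0" and t: "\<gamma>dec / L < t" "t \<le> 1 / Lbar"
  shows "(L + 1 / t) * sqrt t \<le> L / sqrt Lbar + sqrt (L / \<gamma>dec)"
proof -
  have t0: "t > 0" using t(1) L \<gamma>dec by (meson divide_pos_pos less_trans)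
  have "sqrt t \<le> 1 / sqrt Lbar"
    using real_sqrt_le_mono[OF t(2)] by (simp add: real_sqrt_divide)
  hence "L * sqrt t \<le> L / sqrt Lbar" using L by (simp add: mult_left_mono divide_inverse)
  moreover have "1 / t < L / \<gamma>dec" using t(1) t0 \<gamma>dec L by (simp add: field_simps)
  hence "sqrt (1 / t) \<le> sqrt (L / \<gamma>dec)" by simp
  hence "1 / sqrt t \<le> sqrt (L / \<gamma>dec)" by (simp add: real_sqrt_divide)
  moreover have "(L + 1 / t) * sqrt t = L * sqrt t + 1 / sqrt t"
    using t0 by (simp add: field_simps)
  ultimately show ?thesis by simp
qed

lemma prox_grad_dist0_subdiff_le_sqrt:
  fixes f :: "'a::real_inner \<Rightarrow> real"
  assumes f_deriv: "(f has_derivative (\<lambda>d. Df p \<bullet> d)) (at p)" and f_cvx: "convex_on UNIV f"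
    and L: "L \<ge> 0" and Df_lip: "norm (Df p - Df x) \<le> L * norm (p - x)"
    and prox: "is_prox t r (x - t *\<^sub>R Df x) p" and t: "t > 0"
    and proper: "proper_fun r" and r_cvx: "convex_fun r"
    and descent: "f p \<le> f x + Df x \<bullet> (p - x) + 1 / (2 * t) * (norm (p - x))\<^sup>2"
    and lower: "\<And>u. ereal Fmin \<le> ereal (f u) + r u"
    and gap: "ereal (f x) + r x \<le> ereal (Fmin + D)"
  shows "dist0 (subdiff (\<lambda>u. ereal (f u) + r u) p) \<le> ereal ((L + 1 / t) * sqrt (2 * t * D))"
proof -
  have "ereal (Fmin + 1 / (2 * t) * (norm (p - x))\<^sup>2)
      \<le> ereal (f p) + r p + ereal (1 / (2 * t) * (norm (p - x))\<^sup>2)"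
    using lower[of p] by (metis add_right_mono plus_ereal.simps(1))
  also have "\<dots> \<le> ereal (Fmin + D)"
    using prox_grad_sufficient_decrease[where f = f and Df = Df, OF prox t proper r_cvx descent] gap
    by (rule order_trans)
  finally have "(norm (p - x))\<^sup>2 \<le> 2 * t * D" using t by (simp add: field_simps)
  hence "norm (p - x) \<le> sqrt (2 * t * D)" by (simp add: real_le_rsqrt)
  hence "(L + 1 / t) * norm (p - x) \<le> (L + 1 / t) * sqrt (2 * t * D)"
    using L t by (intro mult_left_mono) auto
  with prox_grad_dist0_subdiff_le[OF f_deriv f_cvx Df_lip prox t proper r_cvx]
  show ?thesis by (meson ereal_less_eq(3) order_trans)
qed

lemma prox_grad_residual_rate_le:
  fixes L Lbar \<gamma>dec t D E q :: real
  assumes L: "L > 0" and \<gamma>dec: "\<gamma>dec > 0" and t: "\<gamma>dec / L < t" "t \<le> 1 / Lbar"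
    and q: "q > 0" and D: "D \<le> q ^ k * E" and E: "E \<ge> 0"
  shows "(L + 1 / t) * sqrt (2 * t * D)
       \<le> (L / sqrt Lbar + sqrt (L / \<gamma>dec)) * sqrt (2 * E) * q powr (real k / 2)"
proof -
  have t0: "t > 0" using t(1) L \<gamma>dec by (meson divide_pos_pos less_trans)
  have "sqrt (q ^ k) = q powr (real k / 2)"
    using q by (simp add: powr_half_sqrt[symmetric] powr_powr powr_realpow[symmetric])
  moreover have "sqrt (2 * t * D) \<le> sqrt (t * (2 * E) * q ^ k)"
    using D t0 by (simp add: mult_left_mono mult.commute mult.left_commute)
  ultimately have "sqrt (2 * t * D) \<le> sqrt t * (sqrt (2 * E) * q powr (real k / 2))"
    by (simp add: real_sqrt_mult)
  hence "(L + 1 / t) * sqrt (2 * t * D) \<le> ((L + 1 / t) * sqrt t) * (sqrt (2 * E) * q powr (real k / 2))"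
    using L t0 by (simp add: mult_left_mono mult.assoc)
  also have "\<dots> \<le> (L / sqrt Lbar + sqrt (L / \<gamma>dec)) * (sqrt (2 * E) * q powr (real k / 2))"
    using prox_grad_step_constant_le[OF L \<gamma>dec t] E by (intro mult_right_mono) auto
  finally show ?thesis by (simp add: mult.assoc)
qed

section \<open>The accelerated step\<close>

lemma norm_scaleR_add_scaleR_sq_le:
  fixes u v :: "'a::real_inner"
  assumes "p \<ge> 0" "q \<ge> 0"
  shows "(norm (p *\<^sub>R u + q *\<^sub>R v))\<^sup>2 \<le> (p + q) * (p * (norm u)\<^sup>2 + q * (norm v)\<^sup>2)"
proof -
  have "norm (p *\<^sub>R u + q *\<^sub>R v) \<le> p * norm u + q * norm v"
    using norm_triangle_ineq[of "p *\<^sub>R u" "q *\<^sub>R v"] assms by simp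
  hence "(norm (p *\<^sub>R u + q *\<^sub>R v))\<^sup>2 \<le> (p * norm u + q * norm v)\<^sup>2"
    by (simp add: power_mono)
  also have "\<dots> = (p + q) * (p * (norm u)\<^sup>2 + q * (norm v)\<^sup>2) - p * q * (norm u - norm v)\<^sup>2"
    by (simp add: power2_eq_square algebra_simps)
  also have "\<dots> \<le> (p + q) * (p * (norm u)\<^sup>2 + q * (norm v)\<^sup>2)"
    using assms by simp
  finally show ?thesis .
qed

lemma accelerated_extrapolation_identity:
  fixes x z y xs :: "'a::real_vector"
  assumes eta: "\<eta> > 0" and al: "\<alpha> > 0" and ga: "\<gamma> \<ge> 0"
    and g1: "\<gamma>' = \<alpha>\<^sup>2 / \<eta>" and g2: "\<gamma>' = (1 - \<alpha>) * \<gamma> + \<alpha> * \<mu>"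
    and y_def: "y = (1 / (\<alpha> * \<gamma> + \<gamma>')) *\<^sub>R ((\<alpha> * \<gamma>) *\<^sub>R z + \<gamma>' *\<^sub>R x)"
  shows "\<alpha> *\<^sub>R ((1 - \<alpha>) *\<^sub>R x + \<alpha> *\<^sub>R xs - y)
       = \<eta> *\<^sub>R (((1 - \<alpha>) * \<gamma>) *\<^sub>R (xs - z) + (\<alpha> * \<mu>) *\<^sub>R (xs - y))"
proof -
  have eta_gamma': "\<eta> * \<gamma>' = \<alpha>\<^sup>2" using g1 eta by simp
  have cpos: "\<alpha> + \<eta> * \<gamma> > 0" using eta al ga by (simp add: add_pos_nonneg)
  have y_eq: "(\<alpha> + \<eta> * \<gamma>) *\<^sub>R y = (\<eta> * \<gamma>) *\<^sub>R z + \<alpha> *\<^sub>R x"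
  proof -
    have "\<alpha> * \<gamma> + \<gamma>' = \<alpha> * (\<alpha> + \<eta> * \<gamma>) / \<eta>"
      using g1 eta by (simp add: field_simps power2_eq_square)
    hence "(\<alpha> + \<eta> * \<gamma>) * (1 / (\<alpha> * \<gamma> + \<gamma>')) = \<eta> / \<alpha>" using cpos al eta by simp
    hence "(\<alpha> + \<eta> * \<gamma>) *\<^sub>R y = (\<eta> / \<alpha>) *\<^sub>R ((\<alpha> * \<gamma>) *\<^sub>R z + \<gamma>' *\<^sub>R x)"
      by (simp add: y_def)
    also have "\<dots> = (\<eta> * \<gamma>) *\<^sub>R z + ((\<eta> / \<alpha>) * \<gamma>') *\<^sub>R x"
      using al by (simp add: scaleR_add_right)
    also have "(\<eta> / \<alpha>) * \<gamma>' = \<alpha>" using eta_gamma' al by (simp add: power2_eq_square field_simps)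
    finally show ?thesis .
  qed
  have "\<alpha> *\<^sub>R ((1 - \<alpha>) *\<^sub>R x + \<alpha> *\<^sub>R xs - y)
        - \<eta> *\<^sub>R (((1 - \<alpha>) * \<gamma>) *\<^sub>R (xs - z) + (\<alpha> * \<mu>) *\<^sub>R (xs - y))
      = (\<alpha> * (1 - \<alpha>)) *\<^sub>R x + (\<eta> * (1 - \<alpha>) * \<gamma>) *\<^sub>R z
        + (\<alpha>\<^sup>2 - \<eta> * ((1 - \<alpha>) * \<gamma> + \<alpha> * \<mu>)) *\<^sub>R xs + (\<eta> * \<alpha> * \<mu> - \<alpha>) *\<^sub>R y"
    by (simp add: algebra_simps power2_eq_square)
  also have "\<alpha>\<^sup>2 - \<eta> * ((1 - \<alpha>) * \<gamma> + \<alpha> * \<mu>) = 0" using eta_gamma' g2 by simp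
  also have "\<eta> * \<alpha> * \<mu> - \<alpha> = - ((1 - \<alpha>) * (\<alpha> + \<eta> * \<gamma>))"
    using eta_gamma' g2 by (simp add: power2_eq_square algebra_simps)
  also have "(\<alpha> * (1 - \<alpha>)) *\<^sub>R x + (\<eta> * (1 - \<alpha>) * \<gamma>) *\<^sub>R z + 0 *\<^sub>R xs
        + (- ((1 - \<alpha>) * (\<alpha> + \<eta> * \<gamma>))) *\<^sub>R y
      = (1 - \<alpha>) *\<^sub>R ((\<eta> * \<gamma>) *\<^sub>R z + \<alpha> *\<^sub>R x - (\<alpha> + \<eta> * \<gamma>) *\<^sub>R y)"
    by (simp add: algebra_simps)
  also have "\<dots> = 0" using y_eq by simp
  finally show ?thesis by simp
qed

lemma accelerated_combination_norm_le:
  fixes x z y xs :: "'a::real_inner"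
  assumes eta: "\<eta> > 0" and al: "0 < \<alpha>" "\<alpha> \<le> 1" and ga: "\<gamma> \<ge> 0" and mu: "\<mu> \<ge> 0"
    and g1: "\<gamma>' = \<alpha>\<^sup>2 / \<eta>" and g2: "\<gamma>' = (1 - \<alpha>) * \<gamma> + \<alpha> * \<mu>"
    and y_def: "y = (1 / (\<alpha> * \<gamma> + \<gamma>')) *\<^sub>R ((\<alpha> * \<gamma>) *\<^sub>R z + \<gamma>' *\<^sub>R x)"
  shows "(norm ((1 - \<alpha>) *\<^sub>R x + \<alpha> *\<^sub>R xs - y))\<^sup>2
       \<le> \<eta> * ((1 - \<alpha>) * \<gamma> * (norm (xs - z))\<^sup>2 + \<alpha> * \<mu> * (norm (xs - y))\<^sup>2)"
proof -
  let ?w = "(1 - \<alpha>) *\<^sub>R x + \<alpha> *\<^sub>R xs - y"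
  let ?T = "(1 - \<alpha>) * \<gamma> * (norm (xs - z))\<^sup>2 + \<alpha> * \<mu> * (norm (xs - y))\<^sup>2"
  have "\<alpha>\<^sup>2 * (norm ?w)\<^sup>2 = (norm (\<alpha> *\<^sub>R ?w))\<^sup>2" using al by (simp add: power_mult_distrib)
  also have "\<dots> = \<eta>\<^sup>2 * (norm (((1 - \<alpha>) * \<gamma>) *\<^sub>R (xs - z) + (\<alpha> * \<mu>) *\<^sub>R (xs - y)))\<^sup>2"
    unfolding accelerated_extrapolation_identity[OF eta al(1) ga g1 g2 y_def]
    using eta by (simp add: power_mult_distrib)
  also have "\<dots> \<le> \<eta>\<^sup>2 * (((1 - \<alpha>) * \<gamma> + \<alpha> * \<mu>) * ?T)"
    using norm_scaleR_add_scaleR_sq_le[of "(1 - \<alpha>) * \<gamma>" "\<alpha> * \<mu>" "xs - z" "xs - y"] al ga mu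
    by (intro mult_left_mono) auto
  also have "\<dots> = (\<eta> * ((1 - \<alpha>) * \<gamma> + \<alpha> * \<mu>)) * (\<eta> * ?T)"
    by (simp add: power2_eq_square)
  also have "\<eta> * ((1 - \<alpha>) * \<gamma> + \<alpha> * \<mu>) = \<alpha>\<^sup>2" using g1 g2 eta by simp
  finally show ?thesis using al by simp
qed

lemma accelerated_potential_ineq:
  fixes x z y x' xs z' :: "'a::real_inner"
  assumes eta: "\<eta> > 0" and al: "0 < \<alpha>" "\<alpha> \<le> 1" and ga: "\<gamma> \<ge> 0" and mu: "\<mu> \<ge> 0"
    and g1: "\<gamma>' = \<alpha>\<^sup>2 / \<eta>" and g2: "\<gamma>' = (1 - \<alpha>) * \<gamma> + \<alpha> * \<mu>"
    and y_def: "y = (1 / (\<alpha> * \<gamma> + \<gamma>')) *\<^sub>R ((\<alpha> * \<gamma>) *\<^sub>R z + \<gamma>' *\<^sub>R x)"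
    and z'_def: "z' = x + (1 / \<alpha>) *\<^sub>R (x' - x)"
  shows "(1 - \<alpha>) * ((1 / \<eta>) * ((x' - y) \<bullet> (x - y)) - 1 / (2 * \<eta>) * (norm (x' - y))\<^sup>2
                     - \<mu> / 2 * (norm (x - y))\<^sup>2)
       + \<alpha> * ((1 / \<eta>) * ((x' - y) \<bullet> (xs - y)) - 1 / (2 * \<eta>) * (norm (x' - y))\<^sup>2
                - \<mu> / 2 * (norm (xs - y))\<^sup>2)
       \<le> (1 - \<alpha>) * \<gamma> / 2 * (norm (xs - z))\<^sup>2 - \<gamma>' / 2 * (norm (xs - z'))\<^sup>2"
proof -
  define w where "w = (1 - \<alpha>) *\<^sub>R x + \<alpha> *\<^sub>R xs - y"
  define a where "a = x' - y"
  have w_minus_a: "w - a = \<alpha> *\<^sub>R (xs - z')"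
  proof -
    have "\<alpha> *\<^sub>R z' = \<alpha> *\<^sub>R x + (x' - x)" using al z'_def by (simp add: scaleR_add_right)
    thus ?thesis unfolding w_def a_def by (simp add: algebra_simps)
  qed
  have "2 * (a \<bullet> w) - (norm a)\<^sup>2 = (norm w)\<^sup>2 - (norm (w - a))\<^sup>2"
    by (simp add: power2_norm_eq_inner inner_diff_left inner_diff_right inner_commute)
  also have "(norm (w - a))\<^sup>2 = \<alpha>\<^sup>2 * (norm (xs - z'))\<^sup>2"
    using w_minus_a al by (simp add: power_mult_distrib)
  finally have "(1 / (2 * \<eta>)) * (2 * (a \<bullet> w) - (norm a)\<^sup>2)
      = (1 / (2 * \<eta>)) * (norm w)\<^sup>2 - \<gamma>' / 2 * (norm (xs - z'))\<^sup>2"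
    using g1 eta by (simp add: field_simps mult.assoc[symmetric])
  moreover have "(1 / (2 * \<eta>)) * (norm w)\<^sup>2
      \<le> (1 - \<alpha>) * \<gamma> / 2 * (norm (xs - z))\<^sup>2 + \<alpha> * \<mu> / 2 * (norm (xs - y))\<^sup>2"
    using accelerated_combination_norm_le[OF eta al ga mu g1 g2 y_def, of xs] eta
    unfolding w_def by (simp add: field_simps)
  moreover have "(1 - \<alpha>) * ((1 / \<eta>) * ((x' - y) \<bullet> (x - y)) - 1 / (2 * \<eta>) * (norm (x' - y))\<^sup>2
                     - \<mu> / 2 * (norm (x - y))\<^sup>2)
       + \<alpha> * ((1 / \<eta>) * ((x' - y) \<bullet> (xs - y)) - 1 / (2 * \<eta>) * (norm (x' - y))\<^sup>2
                - \<mu> / 2 * (norm (xs - y))\<^sup>2)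
      = (1 / (2 * \<eta>)) * (2 * (a \<bullet> w) - (norm a)\<^sup>2)
        - (1 - \<alpha>) * \<mu> / 2 * (norm (x - y))\<^sup>2 - \<alpha> * \<mu> / 2 * (norm (xs - y))\<^sup>2"
  proof -
    have "w = (1 - \<alpha>) *\<^sub>R (x - y) + \<alpha> *\<^sub>R (xs - y)" unfolding w_def by (simp add: algebra_simps)
    hence aw: "a \<bullet> w = (1 - \<alpha>) * (a \<bullet> (x - y)) + \<alpha> * (a \<bullet> (xs - y))"
      by (simp only: inner_add_right inner_scaleR_right)
    show ?thesis using eta unfolding a_def[symmetric] aw by (simp add: field_simps)
  qed
  moreover have "(1 - \<alpha>) * \<mu> / 2 * (norm (x - y))\<^sup>2 \<ge> 0" using al mu by simp
  ultimately show ?thesis by linarith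
qed

lemma inexact_prox_grad_three_point_ineq:
  fixes x' y u v s Dgy :: "'a::real_inner" and gy gx' gu Hx' Hu :: real
  assumes eta: "\<eta> > 0"
    and g_sc: "gy + Dgy \<bullet> (u - y) + \<mu> / 2 * (norm (u - y))\<^sup>2 \<le> gu"
    and g_descent: "gx' \<le> gy + Dgy \<bullet> (x' - y) + 1 / (2 * \<eta>) * (norm (x' - y))\<^sup>2"
    and H_subgrad: "Hx' + v \<bullet> (u - x') \<le> Hu"
    and s_def: "s = Dgy + (1 / \<eta>) *\<^sub>R (x' - y) + v"
    and s_norm: "norm s \<le> e"
  shows "gx' + Hx' \<le> gu + Hu + (1 / \<eta>) * ((x' - y) \<bullet> (u - y)) - 1 / (2 * \<eta>) * (norm (x' - y))\<^sup>2
            - \<mu> / 2 * (norm (u - y))\<^sup>2 + e * norm (u - x')"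
proof -
  have "- (s \<bullet> (u - x')) \<le> norm s * norm (u - x')"
    using Cauchy_Schwarz_ineq2[of s "u - x'"] by linarith
  also have "\<dots> \<le> e * norm (u - x')" using s_norm by (simp add: mult_right_mono)
  finally have cs: "- (s \<bullet> (u - x')) \<le> e * norm (u - x')" .
  have "v \<bullet> (u - x') = s \<bullet> (u - x') - (Dgy \<bullet> (u - y) - Dgy \<bullet> (x' - y))
      - (1 / \<eta>) * ((x' - y) \<bullet> (u - y)) + (1 / \<eta>) * (norm (x' - y))\<^sup>2"
    unfolding s_def
    by (simp add: inner_add_left inner_diff_right power2_norm_eq_inner algebra_simps)
  moreover have "1 / (2 * \<eta>) * (norm (x' - y))\<^sup>2 - (1 / \<eta>) * (norm (x' - y))\<^sup>2
      = - (1 / (2 * \<eta>) * (norm (x' - y))\<^sup>2)"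
    using eta by (simp add: field_simps)
  ultimately show ?thesis using g_sc g_descent H_subgrad cs by linarith
qed

lemma le_of_forall_le_add_mult:
  fixes A B c :: real
  assumes "\<And>e. 0 < e \<Longrightarrow> A \<le> B + e * c" "c \<ge> 0"
  shows "A \<le> B"
proof (rule field_le_epsilon)
  fix e :: real assume e: "0 < e"
  have "A \<le> B + (e / (c + 1)) * c" using assms(1)[of "e / (c + 1)"] e assms(2) by simp
  also have "(e / (c + 1)) * c \<le> e" using e assms(2) by (simp add: field_simps)
  finally show "A \<le> B + e" by simp
qed

lemma dist0_le_0_imp_ex_norm_less:
  assumes "dist0 S \<le> 0" "e > 0"
  shows "\<exists>s\<in>S. norm s < e"
proof -
  have "dist0 S < ereal e" using assms by (simp add: le_less_trans)
  thus ?thesis unfolding dist0_def by (auto simp: INF_less_iff)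
qed

section \<open>The iAPG iteration with exact steps\<close>

locale iapg =
  fixes g :: "'a::real_inner \<Rightarrow> real" and Dg :: "'a \<Rightarrow> 'a" and H :: "'a \<Rightarrow> ereal"
    and \<mu> Lg Lbar \<gamma>dec :: real and xstar :: 'a
    and x z y :: "nat \<Rightarrow> 'a" and \<eta> \<alpha> \<gamma> :: "nat \<Rightarrow> real"
  assumes g_grad: "\<And>u. (g has_derivative (\<lambda>d. Dg u \<bullet> d)) (at u)"
    and g_sc: "strongly_convex \<mu> g" and mu_pos: "\<mu> > 0"
    and H_not_minf: "\<And>u. H u \<noteq> -\<infinity>"
    and xstar_min: "\<And>u. ereal (g xstar) + H xstar \<le> ereal (g u) + H u"
    and gdec: "0 < \<gamma>dec" "\<gamma>dec < 1"
    and Lbar: "Lbar > 0" "\<mu> \<le> Lbar" "Lbar \<le> Lg"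
    and init: "x 0 = z 0" "H (x 0) \<noteq> \<infinity>"
    and gamma0: "\<gamma> 0 \<ge> \<mu>"
    and pos: "\<And>k. \<eta> k > 0" "\<And>k. \<alpha> k > 0" "\<And>k. \<gamma> k > 0"
    and step_i: "\<And>k. \<gamma>dec / Lg < \<eta> k \<and> \<eta> k \<le> 1 / Lbar"
    and step_ii: "\<And>k. \<gamma> (Suc k) = (\<alpha> k)\<^sup>2 / \<eta> k \<and> (\<alpha> k)\<^sup>2 / \<eta> k = (1 - \<alpha> k) * \<gamma> k + \<alpha> k * \<mu>"
    and step_iii: "\<And>k. y k = (1 / (\<alpha> k * \<gamma> k + \<gamma> (Suc k))) *\<^sub>R
                              ((\<alpha> k * \<gamma> k) *\<^sub>R z k + \<gamma> (Suc k) *\<^sub>R x k)"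
    and step_iv: "\<And>k. dist0 ((\<lambda>v. Dg (y k) + (1 / \<eta> k) *\<^sub>R (x (Suc k) - y k) + v)
                              ` subdiff H (x (Suc k))) \<le> 0"
    and step_v: "\<And>k. g (x (Suc k)) \<le> g (y k) + Dg (y k) \<bullet> (x (Suc k) - y k)
                              + 1 / (2 * \<eta> k) * (norm (x (Suc k) - y k))\<^sup>2"
    and step_vi: "\<And>k. z (Suc k) = x k + (1 / \<alpha> k) *\<^sub>R (x (Suc k) - x k)"
begin

definition F :: "'a \<Rightarrow> ereal" where
  "F u = ereal (g u) + H u"

definition Fstar :: real where
  "Fstar = real_of_ereal (F xstar)"

definition kappa :: real where
  "kappa = Lg / (\<gamma>dec * \<mu>)"

definition potential :: "nat \<Rightarrow> real" where
  "potential k = real_of_ereal (F (x k)) - Fstar + \<gamma> k / 2 * (norm (xstar - z k))\<^sup>2"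

lemma F_eq_ereal: "H u \<noteq> \<infinity> \<Longrightarrow> F u = ereal (g u + real_of_ereal (H u))"
  using H_not_minf[of u] unfolding F_def by (cases "H u") auto

lemma H_xstar_finite: "H xstar \<noteq> \<infinity>"
  using xstar_min[of "x 0"] init(2) H_not_minf[of "x 0"] by (cases "H (x 0)") auto

lemma Fstar_le: "ereal Fstar \<le> F u"
  using xstar_min[of u] F_eq_ereal[OF H_xstar_finite] unfolding Fstar_def F_def by simp

text \<open>The infimum in (iv) need not be attained, so the three-point inequality is obtained from
  subgradients whose residual has arbitrarily small norm.\<close>
lemma iterate_three_point_ineq:
  shows "H (x (Suc k)) \<noteq> \<infinity>"
    and "H u \<noteq> \<infinity> \<Longrightarrow> real_of_ereal (F (x (Suc k)))
           \<le> real_of_ereal (F u) + (1 / \<eta> k) * ((x (Suc k) - y k) \<bullet> (u - y k))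
              - 1 / (2 * \<eta> k) * (norm (x (Suc k) - y k))\<^sup>2 - \<mu> / 2 * (norm (u - y k))\<^sup>2"
proof -
  let ?x' = "x (Suc k)" and ?y = "y k"
  let ?res = "\<lambda>v. Dg ?y + (1 / \<eta> k) *\<^sub>R (?x' - ?y) + v"
  have small: "\<exists>v\<in>subdiff H ?x'. norm (?res v) < e" if "e > 0" for e
    using dist0_le_0_imp_ex_norm_less[OF step_iv that] by blast
  then obtain v1 where "v1 \<in> subdiff H ?x'" by (meson zero_less_one)
  thus H_x': "H ?x' \<noteq> \<infinity>" by (auto simp: subdiff_def)
  assume H_u: "H u \<noteq> \<infinity>"
  show "real_of_ereal (F ?x') \<le> real_of_ereal (F u) + (1 / \<eta> k) * ((?x' - ?y) \<bullet> (u - ?y))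
           - 1 / (2 * \<eta> k) * (norm (?x' - ?y))\<^sup>2 - \<mu> / 2 * (norm (u - ?y))\<^sup>2"
  proof (rule le_of_forall_le_add_mult[where c = "norm (u - ?x')"])
    fix e :: real assume "0 < e"
    then obtain v where v: "v \<in> subdiff H ?x'" and res: "norm (?res v) < e" using small by blast
    have "H ?x' + ereal (v \<bullet> (u - ?x')) \<le> H u" using v by (simp add: subdiff_def)
    hence "real_of_ereal (H ?x') + v \<bullet> (u - ?x') \<le> real_of_ereal (H u)"
      using H_x' H_u H_not_minf[of ?x'] H_not_minf[of u] by (cases "H ?x'"; cases "H u") auto
    from inexact_prox_grad_three_point_ineq[OF pos(1) strongly_convex_gradient_ineq[OF g_grad g_sc]
        step_v this refl less_imp_le[OF res]]
    show "real_of_ereal (F ?x') \<le> real_of_ereal (F u) + (1 / \<eta> k) * ((?x' - ?y) \<bullet> (u - ?y))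
           - 1 / (2 * \<eta> k) * (norm (?x' - ?y))\<^sup>2 - \<mu> / 2 * (norm (u - ?y))\<^sup>2 + e * norm (u - ?x')"
      using F_eq_ereal[OF H_x'] F_eq_ereal[OF H_u] by simp
  qed simp
qed

lemma H_iterate_finite: "H (x k) \<noteq> \<infinity>"
  using init(2) iterate_three_point_ineq(1) by (cases k) auto

lemma alpha_le_one_if_gamma_ge_mu:
  assumes "\<mu> \<le> \<gamma> k"
  shows "\<alpha> k \<le> 1"
proof (rule ccontr)
  assume "\<not> \<alpha> k \<le> 1"
  hence "1 < (\<alpha> k)\<^sup>2" by (simp add: one_less_power)
  moreover have "(1 - \<alpha> k) * \<gamma> k + \<alpha> k * \<mu> \<le> \<mu>"
    using \<open>\<not> \<alpha> k \<le> 1\<close> assms mult_right_mono[of 1 "\<alpha> k" "\<gamma> k - \<mu>"]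
    by (simp add: algebra_simps)
  hence "(\<alpha> k)\<^sup>2 / \<eta> k \<le> \<mu>" using step_ii[of k] by simp
  hence "(\<alpha> k)\<^sup>2 \<le> \<mu> * \<eta> k" using pos(1)[of k] by (simp add: divide_le_eq mult.commute)
  also have "\<dots> \<le> Lbar * (1 / Lbar)"
    using step_i[of k] mu_pos Lbar pos(1)[of k] by (intro mult_mono) auto
  finally show False using Lbar by simp
qed

lemma gamma_ge_mu: "\<mu> \<le> \<gamma> k"
proof (induction k)
  case 0
  show ?case using gamma0 .
next
  case (Suc k)
  hence "0 \<le> (1 - \<alpha> k) * (\<gamma> k - \<mu>)" using alpha_le_one_if_gamma_ge_mu by simp
  thus ?case using step_ii[of k] by (simp add: algebra_simps)
qed

lemma alpha_le_one: "\<alpha> k \<le> 1"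
  using alpha_le_one_if_gamma_ge_mu[OF gamma_ge_mu] .

lemma one_minus_alpha_le_rate: "1 - \<alpha> k \<le> 1 - sqrt (1 / kappa)"
proof -
  have "\<gamma>dec / Lg * \<mu> < \<eta> k * \<mu>" using step_i[of k] mu_pos by (intro mult_strict_right_mono) auto
  also have "\<dots> \<le> \<eta> k * \<gamma> (Suc k)" using gamma_ge_mu[of "Suc k"] pos(1)[of k] by simp
  also have "\<dots> = (\<alpha> k)\<^sup>2" using step_ii[of k] pos(1)[of k] by (simp add: field_simps)
  finally have "1 / kappa \<le> (\<alpha> k)\<^sup>2" unfolding kappa_def by simp
  hence "sqrt (1 / kappa) \<le> sqrt ((\<alpha> k)\<^sup>2)" by (rule real_sqrt_le_mono)
  thus ?thesis using pos(2)[of k] by simp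
qed

lemma rate_pos: "0 < 1 - sqrt (1 / kappa)"
proof -
  have "\<gamma>dec * \<mu> < 1 * Lg" using gdec mu_pos Lbar by (intro mult_strict_right_mono[THEN less_le_trans]) auto
  thus ?thesis using Lbar unfolding kappa_def by simp
qed

lemma potential_nonneg: "0 \<le> potential k"
  using Fstar_le[of "x k"] F_eq_ereal[OF H_iterate_finite] pos(3)[of k] unfolding potential_def by simp

text \<open>Contraction of the potential: take the convex combination of the three-point inequalities
  at u = x k and u = xstar with weights 1 - \<alpha> k and \<alpha> k.\<close>
lemma potential_Suc_le: "potential (Suc k) \<le> (1 - \<alpha> k) * potential k"
proof -
  let ?x' = "x (Suc k)" and ?y = "y k" and ?a = "\<alpha> k" and ?e = "\<eta> k"
  let ?Fv = "\<lambda>u. real_of_ereal (F u)"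
  define A where "A = (1 / ?e) * ((?x' - ?y) \<bullet> (x k - ?y)) - 1 / (2 * ?e) * (norm (?x' - ?y))\<^sup>2
    - \<mu> / 2 * (norm (x k - ?y))\<^sup>2"
  define B where "B = (1 / ?e) * ((?x' - ?y) \<bullet> (xstar - ?y)) - 1 / (2 * ?e) * (norm (?x' - ?y))\<^sup>2
    - \<mu> / 2 * (norm (xstar - ?y))\<^sup>2"
  have "?Fv ?x' \<le> ?Fv (x k) + A"
    using iterate_three_point_ineq(2)[where k = k, OF H_iterate_finite[of k]] unfolding A_def by simp
  hence "(1 - ?a) * ?Fv ?x' \<le> (1 - ?a) * (?Fv (x k) + A)"
    using alpha_le_one[of k] by (intro mult_left_mono) auto
  moreover have "?Fv ?x' \<le> Fstar + B"
    using iterate_three_point_ineq(2)[where k = k, OF H_xstar_finite] unfolding B_def Fstar_def by simp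
  hence "?a * ?Fv ?x' \<le> ?a * (Fstar + B)"
    using pos(2)[of k] by (intro mult_left_mono) auto
  moreover have "\<gamma> (Suc k) = (1 - ?a) * \<gamma> k + ?a * \<mu>" using step_ii[of k] by simp
  hence "(1 - ?a) * A + ?a * B
      \<le> (1 - ?a) * \<gamma> k / 2 * (norm (xstar - z k))\<^sup>2 - \<gamma> (Suc k) / 2 * (norm (xstar - z (Suc k)))\<^sup>2"
    unfolding A_def B_def
    using accelerated_potential_ineq[OF pos(1) pos(2) alpha_le_one less_imp_le[OF pos(3)]
        less_imp_le[OF mu_pos] conjunct1[OF step_ii] _ step_iii step_vi]
    by blast
  moreover have "potential (Suc k) - (1 - ?a) * potential k
      = (?Fv ?x' - ((1 - ?a) * (?Fv (x k) + A) + ?a * (Fstar + B)))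
        + ((1 - ?a) * A + ?a * B - ((1 - ?a) * \<gamma> k / 2 * (norm (xstar - z k))\<^sup>2
                                    - \<gamma> (Suc k) / 2 * (norm (xstar - z (Suc k)))\<^sup>2))"
    unfolding potential_def by (simp add: algebra_simps)
  moreover have "(1 - ?a) * ?Fv ?x' + ?a * ?Fv ?x' = ?Fv ?x'" by (simp add: algebra_simps)
  ultimately show ?thesis by linarith
qed

lemma potential_le_rate_pow: "potential k \<le> (1 - sqrt (1 / kappa)) ^ k * potential 0"
proof (induction k)
  case (Suc k)
  have "potential (Suc k) \<le> (1 - \<alpha> k) * potential k" by (rule potential_Suc_le)
  also have "\<dots> \<le> (1 - sqrt (1 / kappa)) * potential k"
    using one_minus_alpha_le_rate potential_nonneg by (intro mult_right_mono)
  also have "\<dots> \<le> (1 - sqrt (1 / kappa)) * ((1 - sqrt (1 / kappa)) ^ k * potential 0)"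
    using Suc rate_pos by (intro mult_left_mono) auto
  finally show ?case by simp
qed simp

lemma F_iterate_le: "F (x k) \<le> ereal (Fstar + potential k)"
  using F_eq_ereal[OF H_iterate_finite[of k]] pos(3)[of k] unfolding potential_def by simp

end

theorem theorem3p7:
  fixes g h :: "'a::euclidean_space \<Rightarrow> real"
    and Dg Dh :: "'a \<Rightarrow> 'a"
    and r :: "'a \<Rightarrow> ereal"
    and \<mu> Lg Lh Lbar \<gamma>dec :: real
    and xstar :: 'a
    and x z y xt :: "nat \<Rightarrow> 'a"
    and \<eta> \<alpha> \<gamma> \<epsilon> \<eta>t :: "nat \<Rightarrow> real"
  assumes g_grad: "\<And>u. (g has_derivative (\<lambda>d. Dg u \<bullet> d)) (at u)"
    and g_sc: "strongly_convex \<mu> g"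
    and mu_pos: "\<mu> > 0"
    and Lg_pos: "Lg > 0"
    and g_lip: "\<And>u v. norm (Dg u - Dg v) \<le> Lg * norm (u - v)"
    and h_grad: "\<And>u. (h has_derivative (\<lambda>d. Dh u \<bullet> d)) (at u)"
    and h_cvx: "convex_on UNIV h"
    and h_lip: "\<And>u v. norm (Dh u - Dh v) \<le> Lh * norm (u - v)"
    and r_proper: "proper_fun r" and r_closed: "closed_fun r" and r_convex: "convex_fun r"
    and xstar_min: "\<And>u. ereal (g xstar) + ereal (h xstar) + r xstar \<le> ereal (g u) + ereal (h u) + r u"
    and gdec: "0 < \<gamma>dec" "\<gamma>dec < 1"
    and Lbar: "Lbar > 0" "\<mu> \<le> Lbar" "Lbar \<le> Lg"
    and init: "x 0 = z 0" "r (x 0) \<noteq> \<infinity>"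
    and gamma0: "\<gamma> 0 \<ge> \<mu>"
    and pos: "\<And>k. \<eta> k > 0" "\<And>k. \<alpha> k > 0" "\<And>k. \<gamma> k > 0"
    and eps0: "\<And>k. \<epsilon> k = 0"
    and step_i: "\<And>k. \<gamma>dec / Lg < \<eta> k \<and> \<eta> k \<le> 1 / Lbar"
    and step_ii: "\<And>k. \<gamma> (Suc k) = (\<alpha> k)\<^sup>2 / \<eta> k \<and> (\<alpha> k)\<^sup>2 / \<eta> k = (1 - \<alpha> k) * \<gamma> k + \<alpha> k * \<mu>"
    and step_iii: "\<And>k. y k = (1 / (\<alpha> k * \<gamma> k + \<gamma> (Suc k))) *\<^sub>R
                              ((\<alpha> k * \<gamma> k) *\<^sub>R z k + \<gamma> (Suc k) *\<^sub>R x k)"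
    and step_iv: "\<And>k. dist0 ((\<lambda>v. Dg (y k) + (1 / \<eta> k) *\<^sub>R (x (Suc k) - y k) + v)
                              ` subdiff (\<lambda>u. ereal (h u) + r u) (x (Suc k))) \<le> ereal (\<epsilon> k)"
    and step_v: "\<And>k. g (x (Suc k)) \<le> g (y k) + Dg (y k) \<bullet> (x (Suc k) - y k)
                              + 1 / (2 * \<eta> k) * (norm (x (Suc k) - y k))\<^sup>2"
    and step_vi: "\<And>k. z (Suc k) = x k + (1 / \<alpha> k) *\<^sub>R (x (Suc k) - x k)"
    and etat: "\<And>k. \<gamma>dec / (Lg + Lh) < \<eta>t k \<and> \<eta>t k \<le> 1 / Lbar"
    and xt_prox: "\<And>k. is_prox (\<eta>t k) r (x k - \<eta>t k *\<^sub>R (Dg (x k) + Dh (x k))) (xt k)"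
    and xt_desc: "\<And>k. g (xt k) + h (xt k) \<le> g (x k) + h (x k)
                     + (Dg (x k) + Dh (x k)) \<bullet> (xt k - x k) + 1 / (2 * \<eta>t k) * (norm (xt k - x k))\<^sup>2"
  shows "\<forall>k. dist0 (subdiff (\<lambda>u. ereal (g u) + ereal (h u) + r u) (xt k)) \<le>
    ereal (((Lg + Lh) / sqrt Lbar + sqrt ((Lg + Lh) / \<gamma>dec))
      * sqrt (2 * (real_of_ereal (ereal (g (x 0)) + ereal (h (x 0)) + r (x 0))
                   - real_of_ereal (ereal (g xstar) + ereal (h xstar) + r xstar)
                   + \<gamma> 0 / 2 * (norm (xstar - z 0))\<^sup>2))
      * (1 - sqrt (1 / (Lg / (\<gamma>dec * \<mu>)))) powr (real k / 2))"
proof -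
  interpret iapg g Dg "\<lambda>u. ereal (h u) + r u" \<mu> Lg Lbar \<gamma>dec xstar x z y \<eta> \<alpha> \<gamma>
  proof unfold_locales
    show "ereal (h u) + r u \<noteq> -\<infinity>" for u using r_proper by (auto simp: proper_fun_def)
    show "ereal (g xstar) + (ereal (h xstar) + r xstar) \<le> ereal (g u) + (ereal (h u) + r u)" for u
      using xstar_min[of u] by (metis add.assoc)
    show "ereal (h (x 0)) + r (x 0) \<noteq> \<infinity>" using init(2) by simp
    show "dist0 ((\<lambda>v. Dg (y k) + (1 / \<eta> k) *\<^sub>R (x (Suc k) - y k) + v)
        ` subdiff (\<lambda>u. ereal (h u) + r u) (x (Suc k))) \<le> 0" for k
      using step_iv[of k] by (simp add: eps0 zero_ereal_def)
  qed (fact assms)+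
  have F_eq: "F = (\<lambda>u. ereal (g u + h u) + r u)" "F = (\<lambda>u. ereal (g u) + ereal (h u) + r u)"
    by (simp_all add: fun_eq_iff F_def add.assoc[symmetric])
  have L: "Lg + Lh > 0" using Lg_pos lipschitz_constant_nonneg[OF h_lip] by simp
  have "dist0 (subdiff F (xt k)) \<le> ereal (((Lg + Lh) / sqrt Lbar + sqrt ((Lg + Lh) / \<gamma>dec))
      * sqrt (2 * potential 0) * (1 - sqrt (1 / kappa)) powr (real k / 2))" for k
  proof -
    have t: "\<eta>t k > 0" using etat[of k] gdec L by (meson divide_pos_pos less_trans)
    have "dist0 (subdiff F (xt k)) \<le> ereal ((Lg + Lh + 1 / \<eta>t k) * sqrt (2 * \<eta>t k * potential k))"
      unfolding F_eq(1)
    proof (rule prox_grad_dist0_subdiff_le_sqrt[where Df = "\<lambda>u. Dg u + Dh u" and Fmin = Fstar])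
      show "((\<lambda>u. g u + h u) has_derivative (\<lambda>d. (Dg (xt k) + Dh (xt k)) \<bullet> d)) (at (xt k))"
        using has_derivative_add[OF g_grad h_grad] by (simp add: inner_add_left)
      show "convex_on UNIV (\<lambda>u. g u + h u)"
        using strongly_convex_imp_convex_on[OF g_sc] mu_pos h_cvx by (simp add: convex_on_add)
      show "norm (Dg (xt k) + Dh (xt k) - (Dg (x k) + Dh (x k))) \<le> (Lg + Lh) * norm (xt k - x k)"
        using norm_triangle_ineq[of "Dg (xt k) - Dg (x k)" "Dh (xt k) - Dh (x k)"]
          g_lip[of "xt k" "x k"] h_lip[of "xt k" "x k"] by (simp add: algebra_simps)
      show "ereal Fstar \<le> ereal (g u + h u) + r u" for u using Fstar_le[of u] by (simp add: F_eq)
      show "ereal (g (x k) + h (x k)) + r (x k) \<le> ereal (Fstar + potential k)"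
        using F_iterate_le[of k] by (simp add: F_eq)
    qed (use L t xt_prox xt_desc r_proper r_convex in auto)
    also have "\<dots> \<le> ereal (((Lg + Lh) / sqrt Lbar + sqrt ((Lg + Lh) / \<gamma>dec)) * sqrt (2 * potential 0)
           * (1 - sqrt (1 / kappa)) powr (real k / 2))"
      using etat[of k] by (simp, intro prox_grad_residual_rate_le L gdec(1) rate_pos
          potential_le_rate_pow potential_nonneg) auto
    finally show ?thesis .
  qed
  thus ?thesis unfolding potential_def Fstar_def kappa_def F_eq(2) by simp
qed

end
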